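(* Let $X$ be as in the standing setting with skeleton $X_1,\dots,X_k$. Let $x,y\in X$ lie in no $\operatorname{span}X_l$, and suppose $x\in\operatorname{pos}\{x_i,x_j\}$ and $y\in\operatorname{pos}\{y_i,y_j\}$ for some $i\neq j$, $x_i,y_i\in X_i$, $x_j,y_j\in X_j$. If $|X_i|>2$, then $x_i=y_i$.
   Context: Standing setting: $X\subset\mathbb R^n\setminus\{0\}$ is a finite set such that $0$ lies in the interior of $\operatorname{conv}X$, no element of $X$ is a positive multiple of another, and every $n+1$ points of $X$ are in good position. A finite set $A$ is in conical position if $0\notin\operatorname{conv}A$ and no point of $A$ lies in the positive hull (set of nonnegative linear combinations, denoted $\operatorname{pos}$) of the other points; it is in good position otherwise. A skeleton of $X$ is a collection of pairwise disjoint subsets $X_1,\dots,X_k\subseteq X$ such that each $X_i$ is the vertex set of a simplex whose relative interior contains $0$ and $\mathbb R^n=\operatorname{span}X_1\oplus\cdots\oplus\operatorname{span}X_k$. *)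

theory Defs
  imports "HOL-Analysis.Analysis"
begin

definition pos :: "'a::real_vector set \<Rightarrow> 'a set" where
  "pos A = {(\<Sum>a\<in>B. c a *\<^sub>R a) | B c. finite B \<and> B \<subseteq> A \<and> (\<forall>a\<in>B. c a \<ge> 0)}"

definition conical_position :: "'a::real_vector set \<Rightarrow> bool" where
  "conical_position A \<longleftrightarrow> 0 \<notin> convex hull A \<and> (\<forall>a\<in>A. a \<notin> pos (A - {a}))"

definition good_position :: "'a::real_vector set \<Rightarrow> bool" where
  "good_position A \<longleftrightarrow> \<not> conical_position A"

definition standing_setting :: "'a::euclidean_space set \<Rightarrow> bool" where
  "standing_setting X \<longleftrightarrow>
     finite X \<and> 0 \<notin> X \<and> 0 \<in> interior (convex hull X) \<and>
     (\<forall>x\<in>X. \<forall>y\<in>X. \<forall>c::real. x \<noteq> y \<and> c > 0 \<longrightarrow> y \<noteq> c *\<^sub>R x) \<and>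
     (\<forall>A. A \<subseteq> X \<and> card A = DIM('a) + 1 \<longrightarrow> good_position A)"

definition direct_sum_UNIV :: "'i set \<Rightarrow> ('i \<Rightarrow> 'a::real_vector set) \<Rightarrow> bool" where
  "direct_sum_UNIV I V \<longleftrightarrow>
     (\<forall>v. \<exists>!f. (\<forall>i\<in>I. f i \<in> V i) \<and> (\<forall>i. i \<notin> I \<longrightarrow> f i = 0) \<and> v = sum f I)"

definition skeleton :: "'a::euclidean_space set \<Rightarrow> nat \<Rightarrow> (nat \<Rightarrow> 'a set) \<Rightarrow> bool" where
  "skeleton X k Xs \<longleftrightarrow>
     (\<forall>i\<in>{1..k}. Xs i \<subseteq> X) \<and>
     (\<forall>i\<in>{1..k}. \<forall>j\<in>{1..k}. i \<noteq> j \<longrightarrow> Xs i \<inter> Xs j = {}) \<and>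
     (\<forall>i\<in>{1..k}. \<not> affine_dependent (Xs i) \<and> 0 \<in> rel_interior (convex hull (Xs i))) \<and>
     direct_sum_UNIV {1..k} (\<lambda>i. span (Xs i))"

end

theory Submission
  imports Defs
begin

text \<open>Suppose xi \<noteq> yi and write x = a xi + b xj, y = c yi + d yj with a, b, c, d > 0.
  Eliminating the partners in X_j expresses a positive multiple of x through y, xi, yi and vertices
  of X_j with two positive coefficients and a negative one: if xj = yj then
  d x = b y + d a xi - b c yi, and otherwise the barycentric relation of 0 in the simplex X_j
  replaces xj by the other vertices of X_j. Since X_i has a third vertex and the spans of the
  skeleton pieces are independent, these points are linearly independent and extend, by points
  of X, to a basis B. Coordinates of x in B with that sign pattern make the n + 1 points
  B \<union> {x} of X conical, contradicting the standing assumption.\<close>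

lemma pos_finite:
  assumes "finite A"
  shows "pos A = {(\<Sum>a\<in>A. c a *\<^sub>R a) | c. \<forall>a\<in>A. 0 \<le> c a}"
proof (intro equalityI subsetI)
  fix p assume "p \<in> pos A"
  then obtain B c where B: "finite B" "B \<subseteq> A" "\<forall>a\<in>B. 0 \<le> c a" and p: "p = (\<Sum>a\<in>B. c a *\<^sub>R a)"
    unfolding pos_def by blast
  define c' where "c' a = (if a \<in> B then c a else 0)" for a
  have "(\<Sum>a\<in>A. c' a *\<^sub>R a) = (\<Sum>a\<in>B. c' a *\<^sub>R a)"
    by (rule sum.mono_neutral_right) (use assms B in \<open>auto simp: c'_def\<close>)
  also have "\<dots> = p"
    unfolding p by (rule sum.cong) (auto simp: c'_def)
  finally show "p \<in> {(\<Sum>a\<in>A. c a *\<^sub>R a) | c. \<forall>a\<in>A. 0 \<le> c a}"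
    using B by (auto simp: c'_def)
next
  fix p assume "p \<in> {(\<Sum>a\<in>A. c a *\<^sub>R a) | c. \<forall>a\<in>A. 0 \<le> c a}"
  then show "p \<in> pos A"
    unfolding pos_def using assms by blast
qed

lemma pos_doubleton_strict:
  assumes "p \<in> pos {u, v}" "p \<notin> span {u}" "p \<notin> span {v}"
  obtains \<alpha> \<beta> where "\<alpha> > 0" "\<beta> > 0" "p = \<alpha> *\<^sub>R u + \<beta> *\<^sub>R v"
proof -
  have "u \<noteq> v"
    using assms(1,2) by (auto simp: pos_finite span_singleton)
  then obtain \<alpha> \<beta> where "\<alpha> \<ge> 0" "\<beta> \<ge> 0" and p: "p = \<alpha> *\<^sub>R u + \<beta> *\<^sub>R v"
    using assms(1) by (auto simp: pos_finite)
  moreover have "\<alpha> \<noteq> 0" "\<beta> \<noteq> 0"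
    using assms(2,3) p by (auto simp: span_singleton)
  ultimately show ?thesis
    by (intro that[of \<alpha> \<beta>]) auto
qed

lemma pos_remove_relation:
  assumes "finite A" "a \<in> A" "a \<in> pos (A - {a})"
  obtains w where "w a = -1" "\<forall>v\<in>A - {a}. 0 \<le> w v" "(\<Sum>v\<in>A. w v *\<^sub>R v) = 0"
proof -
  obtain c where c: "\<forall>v\<in>A - {a}. 0 \<le> c v" and a: "a = (\<Sum>v\<in>A - {a}. c v *\<^sub>R v)"
    using assms(1,3) by (auto simp: pos_finite)
  have "(\<Sum>v\<in>A. (c(a := -1)) v *\<^sub>R v) = - a + (\<Sum>v\<in>A - {a}. c v *\<^sub>R v)"
    by (simp add: sum.remove[OF assms(1,2)])
  with a c show ?thesis
    by (intro that[of "c(a := -1)"]) auto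
qed

lemma relation_insert_independent:
  fixes x :: "'a::real_vector"
  assumes "finite B" "independent B" "x \<notin> B" "x = (\<Sum>b\<in>B. \<mu> b *\<^sub>R b)"
    and "(\<Sum>v\<in>insert x B. w v *\<^sub>R v) = 0" "b \<in> B"
  shows "w b = - w x * \<mu> b"
proof -
  have "w x *\<^sub>R x = (\<Sum>v\<in>B. (w x * \<mu> v) *\<^sub>R v)"
    by (simp add: assms(4) scaleR_sum_right)
  then have "(\<Sum>v\<in>B. (w v + w x * \<mu> v) *\<^sub>R v) = (\<Sum>v\<in>insert x B. w v *\<^sub>R v)"
    using assms(1,3) by (simp add: scaleR_add_left sum.distrib)
  then have "(\<Sum>v\<in>B. (w v + w x * \<mu> v) *\<^sub>R v) = 0"
    using assms(5) by simp
  then have "w b + w x * \<mu> b = 0"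
    by (rule independentD[OF assms(2,1) subset_refl _ assms(6)])
  then show ?thesis
    by simp
qed

lemma notin_independent_if_negative_coordinate:
  fixes x :: "'a::real_vector"
  assumes "finite B" "independent B" "x = (\<Sum>b\<in>B. \<mu> b *\<^sub>R b)" "b \<in> B" "\<mu> b < 0"
  shows "x \<notin> B"
proof
  assume "x \<in> B"
  have "(\<Sum>b\<in>B. (if b = x then 1 else 0) *\<^sub>R b) = (\<Sum>b\<in>B. if b = x then b else 0)"
    by (rule sum.cong) auto
  also have "\<dots> = x"
    using \<open>x \<in> B\<close> assms(1) by (simp add: sum.delta')
  finally have "(\<Sum>b\<in>B. (\<mu> b - (if b = x then 1 else 0)) *\<^sub>R b) = 0"
    by (simp add: scaleR_diff_left sum_subtractf flip: assms(3))
  then have "\<mu> b - (if b = x then 1 else 0) = 0"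
    by (rule independentD[OF assms(2,1) subset_refl _ assms(4)])
  with assms(5) show False
    by (simp split: if_splits)
qed

lemma zero_notin_convex_hull_insert:
  fixes x :: "'a::real_vector"
  assumes "finite B" "independent B" "x \<notin> B" "x = (\<Sum>b\<in>B. \<mu> b *\<^sub>R b)" "b \<in> B" "\<mu> b > 0"
  shows "0 \<notin> convex hull (insert x B)"
proof
  assume "0 \<in> convex hull (insert x B)"
  then obtain u where u: "\<forall>v\<in>insert x B. 0 \<le> u v" "sum u (insert x B) = 1"
    "(\<Sum>v\<in>insert x B. u v *\<^sub>R v) = 0"
    using assms(1) by (auto simp: convex_hull_finite)
  note relation = relation_insert_independent[OF assms(1-4) u(3)]
  have "u b \<ge> 0" "u x \<ge> 0"
    using u(1) assms(5) by auto
  then have "u x = 0"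
    using relation[OF assms(5)] assms(6) mult_pos_pos[of "u x" "\<mu> b"] by fastforce
  then have "\<forall>v\<in>B. u v = 0"
    using relation by simp
  with \<open>u x = 0\<close> u(2) show False
    using assms(1,3) by simp
qed

lemma notin_pos_insert_remove:
  fixes x :: "'a::real_vector"
  assumes "finite B" "independent B" "x \<notin> B" "x = (\<Sum>b\<in>B. \<mu> b *\<^sub>R b)"
    and pos: "b1 \<in> B" "b2 \<in> B" "b1 \<noteq> b2" "\<mu> b1 > 0" "\<mu> b2 > 0"
    and neg: "b3 \<in> B" "\<mu> b3 < 0"
    and a: "a \<in> insert x B"
  shows "a \<notin> pos (insert x B - {a})"
proof
  assume "a \<in> pos (insert x B - {a})"
  then obtain w where w: "w a = -1" "\<forall>v\<in>insert x B - {a}. 0 \<le> w v"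
    "(\<Sum>v\<in>insert x B. w v *\<^sub>R v) = 0"
    using pos_remove_relation assms(1) a by blast
  note relation = relation_insert_independent[OF assms(1-4) w(3)]
  show False
  proof (cases "a = x")
    case True
    then have "w b3 = \<mu> b3"
      using relation[OF neg(1)] w(1) by simp
    moreover have "w b3 \<ge> 0"
      using w(2) neg(1) assms(3) True by auto
    ultimately show False
      using neg(2) by simp
  next
    case False
    obtain b where b: "b \<in> B" "b \<noteq> a" "\<mu> b > 0"
      using pos by (cases "b1 = a") auto
    have "w b \<ge> 0" "w x \<ge> 0"
      using w(2) b False by auto
    then have "w x = 0"
      using relation[OF b(1)] b(3) mult_pos_pos[of "w x" "\<mu> b"] by fastforce
    then show False
      using relation w(1) a False by simp
  qed
qed

lemma conical_position_insert:
  fixes x :: "'a::real_vector"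
  assumes "finite B" "independent B" "x = (\<Sum>b\<in>B. \<mu> b *\<^sub>R b)"
    and "b1 \<in> B" "b2 \<in> B" "b1 \<noteq> b2" "\<mu> b1 > 0" "\<mu> b2 > 0"
    and "b3 \<in> B" "\<mu> b3 < 0"
  shows "x \<notin> B" and "conical_position (insert x B)"
proof -
  show "x \<notin> B"
    using notin_independent_if_negative_coordinate assms(1-3,9,10) .
  then show "conical_position (insert x B)"
    unfolding conical_position_def
    using zero_notin_convex_hull_insert[OF assms(1,2) _ assms(3,4,7)]
      notin_pos_insert_remove[OF assms(1,2) _ assms(3-10)] by blast
qed

lemma span_eq_UNIV_if_zero_in_interior:
  fixes X :: "'a::euclidean_space set"
  assumes "0 \<in> interior (convex hull X)"
  shows "span X = UNIV"
proof -
  have "interior (span X) \<noteq> {}"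
    using assms interior_mono[OF convex_hull_subset_span[of X]] by blast
  then have "\<not> dim (span X) < DIM('a)"
    using empty_interior_lowdim by blast
  then have "dim X = DIM('a)"
    using dim_subset_UNIV[of X] by simp
  then show ?thesis
    using dim_eq_full by blast
qed

lemma direct_sum_UNIV_inter_zero:
  fixes V :: "'i \<Rightarrow> 'a::real_vector set"
  assumes "direct_sum_UNIV I V" "finite I" "i \<in> I" "j \<in> I" "i \<noteq> j" "\<forall>l\<in>I. 0 \<in> V l"
  shows "V i \<inter> V j \<subseteq> {0}"
proof
  fix p assume p: "p \<in> V i \<inter> V j"
  define single where "single (m::'i) l = (if l = m then p else 0)" for m l
  let ?decomposes = "\<lambda>f. (\<forall>l\<in>I. f l \<in> V l) \<and> (\<forall>l. l \<notin> I \<longrightarrow> f l = 0) \<and> p = sum f I"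
  have decomposes: "?decomposes (single m)" if "m \<in> {i, j}" for m
  proof (intro conjI ballI allI impI)
    show "single m l \<in> V l" if "l \<in> I" for l
      using \<open>m \<in> {i, j}\<close> p that assms(6) by (auto simp: single_def)
    show "single m l = 0" if "l \<notin> I" for l
      using \<open>m \<in> {i, j}\<close> that assms(3,4) by (auto simp: single_def)
    show "p = sum (single m) I"
      using \<open>m \<in> {i, j}\<close> assms(2-4) by (auto simp: single_def)
  qed
  have "\<exists>!f. ?decomposes f"
    using assms(1) unfolding direct_sum_UNIV_def by (rule spec)
  then have "single i = single j"
    using the1_equality decomposes[of i] decomposes[of j] by (metis insertCI)
  then have "single i i = single j i"
    by simp
  then show "p \<in> {0}"
    using assms(5) by (simp add: single_def)
qed

lemma independent_Un_if_span_inter_zero: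
  assumes "independent S" "independent T" "span S \<inter> span T \<subseteq> {0}"
  shows "independent (S \<union> T)"
proof -
  have not_in_span: "a \<notin> span (S \<union> T - {a})"
    if "a \<in> S" "independent S" "span S \<inter> span T \<subseteq> {0}" for S T :: "'a set" and a
  proof
    assume "a \<in> span (S \<union> T - {a})"
    then have "a \<in> span ((S - {a}) \<union> T)"
      using span_mono[of "S \<union> T - {a}" "(S - {a}) \<union> T"] by blast
    then obtain p q where p: "p \<in> span (S - {a})" and q: "q \<in> span T" and a: "a = p + q"
      unfolding span_Un by blast
    have "q = a - p"
      using a by simp
    moreover have "a - p \<in> span S"
      using p span_mono[of "S - {a}" S] span_base[OF \<open>a \<in> S\<close>] by (blast intro: span_diff)
    ultimately have "q = 0"
      using q that(3) by blast
    then have "a \<in> span (S - {a})"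
      using a p by simp
    then show False
      using that(1,2) dependent_def by blast
  qed
  have "span T \<inter> span S \<subseteq> {0}"
    using assms(3) by blast
  then have "a \<notin> span (S \<union> T - {a})" if "a \<in> S \<union> T" for a
    using that assms not_in_span[of a S T] not_in_span[of a T S] by (auto simp: Un_commute)
  then show ?thesis
    unfolding dependent_def by blast
qed

lemma independent_insert_exchange:
  assumes "independent (insert z S)" "z \<notin> S" "y - d *\<^sub>R z \<in> span S" "d \<noteq> 0"
  shows "independent (insert y S)"
proof -
  have S: "independent S" "z \<notin> span S"
    using assms(1,2) by (simp_all add: independent_insert)
  have "y \<notin> span S"
  proof
    assume "y \<in> span S"
    moreover have "d *\<^sub>R z = y - (y - d *\<^sub>R z)"
      by simp
    ultimately have "d *\<^sub>R z \<in> span S"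
      using assms(3) by (metis span_diff)
    then show False
      using S(2) assms(4) span_mul[of "d *\<^sub>R z" S "inverse d"] by simp
  qed
  then show ?thesis
    using S(1) by (simp add: independent_insert)
qed

lemma independent_insert_Un_exchange:
  assumes "independent S" "independent (insert z R)" "z \<notin> R"
    and "span S \<inter> span (insert z R) \<subseteq> {0}"
    and "y - d *\<^sub>R z \<in> span S" "d \<noteq> 0"
  shows "independent (insert y (S \<union> R))"
proof -
  have "z \<notin> S"
  proof
    assume "z \<in> S"
    then have "z = 0"
      using assms(4) span_base[of z S] span_base[of z "insert z R"] by blast
    then show False
      using assms(2) dependent_zero[of "insert z R"] by simp
  qed
  have "independent (insert z (S \<union> R))"
    using independent_Un_if_span_inter_zero[OF assms(1,2,4)] by simp
  moreover have "y - d *\<^sub>R z \<in> span (S \<union> R)"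
    using assms(5) span_mono[of S "S \<union> R"] by blast
  moreover have "z \<notin> S \<union> R"
    using \<open>z \<notin> S\<close> assms(3) by simp
  ultimately show ?thesis
    using independent_insert_exchange assms(6) by blast
qed

text \<open>A relation on S - {a} is shifted by a multiple of the barycentric coordinates of 0,
  which are all positive, into an affine relation on S that is nontrivial at a.\<close>
lemma independent_if_proper_subset_simplex:
  fixes S :: "'a::euclidean_space set"
  assumes aff: "\<not> affine_dependent S" and zero: "0 \<in> rel_interior (convex hull S)"
    and "T \<subset> S"
  shows "independent T"
proof -
  obtain a where a: "a \<in> S" "T \<subseteq> S - {a}"
    using assms(3) by blast
  have fin: "finite S"
    using aff_independent_finite[OF aff] .
  obtain lam where lam: "\<forall>v\<in>S. 0 < lam v" "sum lam S = 1" "(\<Sum>v\<in>S. lam v *\<^sub>R v) = 0"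
    using zero rel_interior_convex_hull_explicit[OF aff] by auto
  have "independent (S - {a})"
  proof
    assume "dependent (S - {a})"
    then obtain u v0 where u: "v0 \<in> S - {a}" "u v0 \<noteq> 0" "(\<Sum>v\<in>S - {a}. u v *\<^sub>R v) = 0"
      using fin dependent_finite[of "S - {a}"] by auto
    define t where "t = sum u (S - {a})"
    define U where "U v = (if v = a then 0 else u v) - t * lam v" for v
    have "sum U S = 0"
      using sum.remove[OF fin a(1), of "\<lambda>v. if v = a then 0 else u v"] lam(2)
      by (simp add: U_def t_def sum_subtractf flip: sum_distrib_left)
    moreover have "(\<Sum>v\<in>S. U v *\<^sub>R v) = 0"
      using sum.remove[OF fin a(1), of "\<lambda>v. (if v = a then 0 else u v) *\<^sub>R v"] u(3) lam(3)
      by (simp add: U_def scaleR_diff_left sum_subtractf flip: scaleR_scaleR scaleR_sum_right)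
    moreover have "\<exists>v\<in>S. U v \<noteq> 0"
    proof (cases "t = 0")
      case True
      then show ?thesis
        using u by (intro bexI[of _ v0]) (auto simp: U_def)
    next
      case False
      then show ?thesis
        using lam(1) a(1) by (intro bexI[of _ a]) (auto simp: U_def)
    qed
    ultimately show False
      using aff affine_dependent_explicit_finite[OF fin] by blast
  qed
  then show ?thesis
    using independent_mono a(2) by blast
qed

lemma simplex_vertex_relation:
  fixes S :: "'a::euclidean_space set"
  assumes "\<not> affine_dependent S" "0 \<in> rel_interior (convex hull S)" "u \<in> S" "v \<in> S" "u \<noteq> v"
  obtains lam where "\<forall>w\<in>S. 0 < lam w"
    "lam u *\<^sub>R u = - lam v *\<^sub>R v - (\<Sum>w\<in>S - {u, v}. lam w *\<^sub>R w)"
proof -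
  obtain lam where lam: "\<forall>w\<in>S. 0 < lam w" "(\<Sum>w\<in>S. lam w *\<^sub>R w) = 0"
    using assms(2) rel_interior_convex_hull_explicit[OF assms(1)] by auto
  define R where "R = S - {u, v}"
  have "S = insert u (insert v R)" "finite R" "u \<notin> R" "v \<notin> R"
    using assms(3,4) aff_independent_finite[OF assms(1)] by (auto simp: R_def)
  then have "(\<Sum>w\<in>S. lam w *\<^sub>R w) = lam u *\<^sub>R u + lam v *\<^sub>R v + (\<Sum>w\<in>R. lam w *\<^sub>R w)"
    using assms(5) by (simp add: add.assoc)
  then show ?thesis
    using that lam unfolding R_def by (simp add: algebra_simps eq_neg_iff_add_eq_0)
qed

lemma conical_subset_extending_independent:
  fixes X :: "'a::euclidean_space set"
  assumes "span X = UNIV" "L \<subseteq> X" "independent L" "x \<in> X"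
    and t: "t > 0" and x: "t *\<^sub>R x = (\<Sum>v\<in>L. \<mu> v *\<^sub>R v)"
    and pos: "b1 \<in> L" "b2 \<in> L" "b1 \<noteq> b2" "\<mu> b1 > 0" "\<mu> b2 > 0"
    and neg: "b3 \<in> L" "\<mu> b3 < 0"
  obtains A where "A \<subseteq> X" "card A = DIM('a) + 1" "conical_position A"
proof -
  obtain B where B: "L \<subseteq> B" "B \<subseteq> X" "independent B" "X \<subseteq> span B"
    using maximal_independent_subset_extend[OF assms(2,3)] by blast
  have finB: "finite B"
    using B(3) finiteI_independent by blast
  have "span B = UNIV"
    using B(4) assms(1) span_mono[OF B(4)] by (auto simp: span_span)
  then have cardB: "card B = DIM('a)"
    using dim_eq_full[of B] dim_eq_card_independent[OF B(3)] by simp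
  define \<nu> where "\<nu> v = (if v \<in> L then \<mu> v / t else 0)" for v
  have "(\<Sum>v\<in>B. \<nu> v *\<^sub>R v) = (\<Sum>v\<in>L. \<nu> v *\<^sub>R v)"
    by (rule sum.mono_neutral_right[OF finB B(1)]) (auto simp: \<nu>_def)
  also have "\<dots> = (\<Sum>v\<in>L. (1 / t) *\<^sub>R (\<mu> v *\<^sub>R v))"
    by (rule sum.cong) (auto simp: \<nu>_def)
  also have "\<dots> = (1 / t) *\<^sub>R (t *\<^sub>R x)"
    by (simp add: x scaleR_sum_right)
  also have "\<dots> = x"
    using t by simp
  finally have x': "x = (\<Sum>v\<in>B. \<nu> v *\<^sub>R v)" ..
  have "\<nu> b1 > 0" "\<nu> b2 > 0" "\<nu> b3 < 0"
    using pos neg t by (auto simp: \<nu>_def divide_neg_pos)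
  then have "x \<notin> B" "conical_position (insert x B)"
    using conical_position_insert[OF finB B(3) x', of b1 b2 b3] pos neg B(1) by blast+
  moreover have "insert x B \<subseteq> X"
    using assms(4) B(2) by simp
  ultimately show ?thesis
    using that[of "insert x B"] finB cardB by simp
qed

lemma conical_subset_shared_partner:
  fixes X :: "'a::euclidean_space set"
  assumes X: "span X = UNIV" "{x, y, xi, yi} \<subseteq> X"
    and ind: "independent {xi, yi}" "xi \<noteq> yi" "z \<noteq> 0"
    and inter: "span {xi, yi} \<inter> span {z} \<subseteq> {0}"
    and y_ne: "y \<notin> {xi, yi}"
    and x: "x = a *\<^sub>R xi + b *\<^sub>R z" and y: "y = c *\<^sub>R yi + d *\<^sub>R z"
    and coeffs: "a > 0" "b > 0" "c > 0" "d > 0"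
  obtains A where "A \<subseteq> X" "card A = DIM('a) + 1" "conical_position A"
proof -
  have "y - d *\<^sub>R z \<in> span {xi, yi}"
    by (simp add: y span_base span_scale)
  then have indL: "independent {y, xi, yi}"
    using independent_insert_Un_exchange[OF ind(1), of z "{}"] ind(3) inter coeffs(4) by simp
  define \<mu> where "\<mu> v = (if v = y then b else if v = xi then d * a else - (b * c))" for v
  have "(\<Sum>v\<in>{y, xi, yi}. \<mu> v *\<^sub>R v) = b *\<^sub>R y + (d * a) *\<^sub>R xi - (b * c) *\<^sub>R yi"
    using y_ne ind(2) by (auto simp: \<mu>_def)
  also have "\<dots> = d *\<^sub>R x"
    by (simp add: x y algebra_simps)
  finally have rep: "d *\<^sub>R x = (\<Sum>v\<in>{y, xi, yi}. \<mu> v *\<^sub>R v)" ..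
  show ?thesis
    by (rule conical_subset_extending_independent[OF X(1) _ indL _ coeffs(4) rep, of y xi yi])
       (use that X(2) y_ne ind(2) coeffs in \<open>auto simp: \<mu>_def\<close>)
qed

lemma conical_subset_distinct_partners:
  fixes X :: "'a::euclidean_space set"
  assumes X: "span X = UNIV" "{x, y, xi, yi} \<subseteq> X" "Sj \<subseteq> X"
    and ind: "independent {xi, yi}" "xi \<noteq> yi"
    and simplex: "\<not> affine_dependent Sj" "0 \<in> rel_interior (convex hull Sj)"
    and partners: "xj \<in> Sj" "yj \<in> Sj" "xj \<noteq> yj"
    and inter: "span {xi, yi} \<inter> span Sj \<subseteq> {0}"
    and y_ne: "y \<notin> {xi, yi} \<union> Sj"
    and x: "x = a *\<^sub>R xi + b *\<^sub>R xj" and y: "y = c *\<^sub>R yi + d *\<^sub>R yj"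
    and coeffs: "a > 0" "b > 0" "c > 0" "d > 0"
  obtains A where "A \<subseteq> X" "card A = DIM('a) + 1" "conical_position A"
proof -
  define R where "R = Sj - {xj, yj}"
  have Sj: "Sj = insert xj (insert yj R)" "finite R"
    using partners aff_independent_finite[OF simplex(1)] by (auto simp: R_def)
  have "{xi, yi} \<inter> Sj \<subseteq> {0}"
    using inter span_superset[of "{xi, yi}"] span_superset[of Sj] by blast
  moreover have "0 \<notin> {xi, yi}"
    using ind(1) dependent_zero by blast
  ultimately have disj: "{xi, yi} \<inter> Sj = {}"
    by blast
  have "insert yj R = Sj - {xj}"
    using Sj partners by (auto simp: R_def)
  then have "independent (insert yj R)"
    using independent_if_proper_subset_simplex[OF simplex] partners(1) by blast
  moreover have "span (insert yj R) \<subseteq> span Sj"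
    using Sj by (intro span_mono) auto
  moreover have "y - d *\<^sub>R yj \<in> span {xi, yi}"
    by (simp add: y span_base span_scale)
  ultimately have indL: "independent (insert y ({xi, yi} \<union> R))"
    using independent_insert_Un_exchange[OF ind(1), of yj R y d] inter coeffs(4)
    by (auto simp: R_def)
  obtain lam where lam: "\<forall>v\<in>Sj. 0 < lam v" "lam xj *\<^sub>R xj = - lam yj *\<^sub>R yj - (\<Sum>v\<in>R. lam v *\<^sub>R v)"
    using simplex_vertex_relation[OF simplex partners] unfolding R_def by blast
  define \<mu> where "\<mu> v = (if v = y then - (b * lam yj) else if v = xi then lam xj * d * a
       else if v = yi then b * lam yj * c else - (b * d * lam v))" for v
  have dist: "y \<noteq> xi" "y \<noteq> yi" "y \<notin> R" "xi \<notin> R" "yi \<notin> R"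
    using y_ne disj by (auto simp: R_def)
  have "(\<Sum>v\<in>R. \<mu> v *\<^sub>R v) = (\<Sum>v\<in>R. (- (b * d)) *\<^sub>R (lam v *\<^sub>R v))"
    by (rule sum.cong) (use dist in \<open>auto simp: \<mu>_def\<close>)
  then have "(\<Sum>v\<in>insert y ({xi, yi} \<union> R). \<mu> v *\<^sub>R v)
      = \<mu> y *\<^sub>R y + \<mu> xi *\<^sub>R xi + \<mu> yi *\<^sub>R yi + (- (b * d)) *\<^sub>R (\<Sum>v\<in>R. lam v *\<^sub>R v)"
    using dist ind(2) Sj(2) by (simp add: scaleR_sum_right algebra_simps)
  also have "\<dots> = (lam xj * d * a) *\<^sub>R xi + (b * d) *\<^sub>R (- lam yj *\<^sub>R yj - (\<Sum>v\<in>R. lam v *\<^sub>R v))"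
    using dist ind(2) by (simp add: \<mu>_def y algebra_simps)
  also have "\<dots> = (lam xj * d) *\<^sub>R x"
    unfolding lam(2)[symmetric] by (simp add: x algebra_simps)
  finally have rep: "(lam xj * d) *\<^sub>R x = (\<Sum>v\<in>insert y ({xi, yi} \<union> R). \<mu> v *\<^sub>R v)" ..
  have lam_pos: "lam xj > 0" "lam yj > 0"
    using lam(1) partners by auto
  show ?thesis
    by (rule conical_subset_extending_independent[OF X(1) _ indL _ _ rep, of xi yi y])
       (use that X y_ne ind(2) coeffs dist lam_pos in \<open>auto simp: \<mu>_def R_def\<close>)
qed

lemma conical_subset_if_distinct_vertices:
  fixes X :: "'a::euclidean_space set"
  assumes X: "span X = UNIV" "Si \<subseteq> X" "Sj \<subseteq> X"
    and Si: "\<not> affine_dependent Si" "0 \<in> rel_interior (convex hull Si)" "card Si > 2"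
    and Sj: "\<not> affine_dependent Sj" "0 \<in> rel_interior (convex hull Sj)"
    and inter: "span Si \<inter> span Sj \<subseteq> {0}"
    and x: "x \<in> X" "x \<notin> span Si" "x \<notin> span Sj"
    and y: "y \<in> X" "y \<notin> span Si" "y \<notin> span Sj"
    and vertices: "xi \<in> Si" "yi \<in> Si" "xi \<noteq> yi" "xj \<in> Sj" "yj \<in> Sj"
    and cones: "x \<in> pos {xi, xj}" "y \<in> pos {yi, yj}"
  obtains A where "A \<subseteq> X" "card A = DIM('a) + 1" "conical_position A"
proof -
  have span_vertex: "span {v} \<subseteq> span S" if "v \<in> S" for v S
    using that by (intro span_mono) auto
  obtain a b where ab: "a > 0" "b > 0" "x = a *\<^sub>R xi + b *\<^sub>R xj"
    using pos_doubleton_strict[OF cones(1)] x span_vertex vertices by blast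
  obtain c d where cd: "c > 0" "d > 0" "y = c *\<^sub>R yi + d *\<^sub>R yj"
    using pos_doubleton_strict[OF cones(2)] y span_vertex vertices by blast
  have "card {xi, yi} < card Si"
    using Si(3) vertices(3) by simp
  then have "{xi, yi} \<subset> Si"
    using vertices by auto
  then have ind: "independent {xi, yi}"
    by (rule independent_if_proper_subset_simplex[OF Si(1,2)])
  have "span {xi, yi} \<subseteq> span Si"
    using vertices by (intro span_mono) auto
  then have inter': "span {xi, yi} \<inter> span Sj \<subseteq> {0}"
    using inter by blast
  have y_ne: "y \<notin> {xi, yi} \<union> Sj"
    using y vertices span_superset[of Si] span_superset[of Sj] by blast
  have X': "{x, y, xi, yi} \<subseteq> X"
    using X x y vertices by auto
  show ?thesis
  proof (cases "xj = yj")
    case True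
    have "xj \<noteq> 0"
      using ab x(2) vertices(1) by (auto simp: span_base span_scale)
    moreover have "span {xi, yi} \<inter> span {xj} \<subseteq> {0}"
      using inter' span_vertex[OF vertices(4)] by blast
    moreover have "y \<notin> {xi, yi}"
      using y_ne by blast
    moreover have "y = c *\<^sub>R yi + d *\<^sub>R xj"
      using cd(3) True by simp
    ultimately show ?thesis
      using conical_subset_shared_partner[OF X(1) X' ind vertices(3) _ _ _ ab(3) _ ab(1,2) cd(1,2)] that
      by blast
  next
    case False
    then show ?thesis
      using conical_subset_distinct_partners[OF X(1) X' X(3) ind vertices(3) Sj vertices(4,5)
          False inter' y_ne ab(3) cd(3) ab(1,2) cd(1,2)] that
      by blast
  qed
qed

theorem proposition5p3:
  fixes X :: "'a::euclidean_space set" and Xs :: "nat \<Rightarrow> 'a set" and k :: nat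
    and x y xi xj yi yj :: 'a and i j :: nat
  assumes "standing_setting X"
    and "skeleton X k Xs"
    and "x \<in> X" and "y \<in> X"
    and "\<forall>l\<in>{1..k}. x \<notin> span (Xs l)"
    and "\<forall>l\<in>{1..k}. y \<notin> span (Xs l)"
    and "i \<in> {1..k}" and "j \<in> {1..k}" and "i \<noteq> j"
    and "xi \<in> Xs i" and "yi \<in> Xs i" and "xj \<in> Xs j" and "yj \<in> Xs j"
    and "x \<in> pos {xi, xj}" and "y \<in> pos {yi, yj}"
    and "card (Xs i) > 2"
  shows "xi = yi"
proof (rule ccontr)
  assume "xi \<noteq> yi"
  from assms(1) have interior: "0 \<in> interior (convex hull X)"
    and good: "\<forall>A. A \<subseteq> X \<and> card A = DIM('a) + 1 \<longrightarrow> good_position A"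
    unfolding standing_setting_def by blast+
  from assms(2) have subset: "\<forall>l\<in>{1..k}. Xs l \<subseteq> X"
    and simplex: "\<forall>l\<in>{1..k}. \<not> affine_dependent (Xs l) \<and> 0 \<in> rel_interior (convex hull (Xs l))"
    and direct: "direct_sum_UNIV {1..k} (\<lambda>l. span (Xs l))"
    unfolding skeleton_def by blast+
  have "span (Xs i) \<inter> span (Xs j) \<subseteq> {0}"
    using direct_sum_UNIV_inter_zero[OF direct finite_atLeastAtMost assms(7-9)] span_zero by blast
  moreover have "x \<notin> span (Xs i)" "x \<notin> span (Xs j)" "y \<notin> span (Xs i)" "y \<notin> span (Xs j)"
    using assms(5-8) by auto
  ultimately obtain A where "A \<subseteq> X" "card A = DIM('a) + 1" "conical_position A"
    using conical_subset_if_distinct_vertices[OF span_eq_UNIV_if_zero_in_interior[OF interior]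
        _ _ _ _ assms(16) _ _ _ assms(3) _ _ assms(4) _ _ assms(10,11) \<open>xi \<noteq> yi\<close> assms(12-15)]
      subset simplex assms(7,8) by blast
  then show False
    using good unfolding good_position_def by blast
qed

end
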